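(* Let $E$ be a regular $(a,b)$-module and let $0=F_0\subsetneq F_1\subsetneq\dots\subsetneq F_n=E$ be a Jordan–Hölder composition series with $F_i/F_{i-1}\simeq E_{\lambda_i}$ for all $i$. Suppose there is $j$ with $\lambda_{j+1}\not\equiv\lambda_j\pmod{\mathbb{Z}}$. Then there is another Jordan–Hölder composition series of $E$ which differs from the given one only in the $j$-th term, replaced by some $F'_j$, such that $F'_j/F_{j-1}\simeq E_{\lambda'_j}$ and $F_{j+1}/F'_j\simeq E_{\lambda'_{j+1}}$ with $\lambda_j\equiv\lambda'_{j+1}\pmod{\mathbb{Z}}$ and $\lambda_{j+1}\equiv\lambda'_j\pmod{\mathbb{Z}}$.
   Context: An $(a,b)$-module is a free module $E$ of finite rank over $\mathbb{C}[[b]]$ with a $\mathbb{C}$-linear endomorphism $a$ satisfying $ab-ba=b^2$. A sub-$(a,b)$-module is a sub-$\mathbb{C}[[b]]$-module stable by $a$; it is normal if the quotient is free over $\mathbb{C}[[b]]$. $E$ is regular if it embeds into an $(a,b)$-module $E'$ with $aE'\subset bE'$. $E_\lambda$ is the rank-one $(a,b)$-module generated by $e_\lambda$ with $ae_\lambda=\lambda be_\lambda$. A Jordan–Hölder composition series of a regular $E$ of rank $n$ is a chain $0=F_0\subsetneq\dots\subsetneq F_n=E$ of normal sub-$(a,b)$-modules of $E$ with $F_i$ of rank $i$; the quotients $F_i/F_{i-1}$ are then isomorphic to some $E_{\lambda_i}$. *)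

theory Defs
  imports "HOL-Computational_Algebra.Formal_Power_Series"
begin

text \<open>An (a,b)-module: the whole type 'v, a module over C[[b]] (complex fps; b = fps_X)
  via sc, free of finite rank, with a C-linear map a such that ab - ba = b^2.\<close>

definition ab_module :: "(complex fps \<Rightarrow> 'v::ab_group_add \<Rightarrow> 'v) \<Rightarrow> ('v \<Rightarrow> 'v) \<Rightarrow> bool" where
  "ab_module sc a \<longleftrightarrow>
     module sc \<and>
     (\<exists>B. finite B \<and> \<not> module.dependent sc B \<and> module.span sc B = UNIV) \<and>
     (\<forall>x y. a (x + y) = a x + a y) \<and>
     (\<forall>c x. a (sc (fps_const c) x) = sc (fps_const c) (a x)) \<and>
     (\<forall>x. a (sc fps_X x) - sc fps_X (a x) = sc (fps_X ^ 2) x)"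

definition ab_regular_embedding ::
  "(complex fps \<Rightarrow> 'v::ab_group_add \<Rightarrow> 'v) \<Rightarrow> ('v \<Rightarrow> 'v) \<Rightarrow>
   (complex fps \<Rightarrow> 'w::ab_group_add \<Rightarrow> 'w) \<Rightarrow> ('w \<Rightarrow> 'w) \<Rightarrow> ('v \<Rightarrow> 'w) \<Rightarrow> bool" where
  "ab_regular_embedding sc a sc' a' f \<longleftrightarrow>
     ab_module sc' a' \<and>
     (\<forall>x y. f (x + y) = f x + f y) \<and> (\<forall>c x. f (sc c x) = sc' c (f x)) \<and>
     inj f \<and> (\<forall>x. f (a x) = a' (f x)) \<and>
     (\<forall>y. \<exists>z. a' y = sc' fps_X z)"

definition ab_submodule :: "(complex fps \<Rightarrow> 'v::ab_group_add \<Rightarrow> 'v) \<Rightarrow> ('v \<Rightarrow> 'v) \<Rightarrow> 'v set \<Rightarrow> bool" where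
  "ab_submodule sc a F \<longleftrightarrow> module.subspace sc F \<and> a ` F \<subseteq> F"

text \<open>G/F is a free C[[b]]-module of finite rank: finitely many elements of G whose
  classes form a basis of G/F.\<close>

definition quotient_free :: "(complex fps \<Rightarrow> 'v::ab_group_add \<Rightarrow> 'v) \<Rightarrow> 'v set \<Rightarrow> 'v set \<Rightarrow> bool" where
  "quotient_free sc G F \<longleftrightarrow>
     (\<exists>(g::nat \<Rightarrow> 'v) k. (\<forall>i<k. g i \<in> G) \<and>
        (\<forall>x\<in>G. \<exists>c. x - (\<Sum>i<k. sc (c i) (g i)) \<in> F) \<and>
        (\<forall>c. (\<Sum>i<k. sc (c i) (g i)) \<in> F \<longrightarrow> (\<forall>i<k. c i = 0)))"

definition normal_ab_submodule :: "(complex fps \<Rightarrow> 'v::ab_group_add \<Rightarrow> 'v) \<Rightarrow> ('v \<Rightarrow> 'v) \<Rightarrow> 'v set \<Rightarrow> bool" where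
  "normal_ab_submodule sc a F \<longleftrightarrow> ab_submodule sc a F \<and> quotient_free sc UNIV F"

definition has_rank :: "(complex fps \<Rightarrow> 'v::ab_group_add \<Rightarrow> 'v) \<Rightarrow> 'v set \<Rightarrow> nat \<Rightarrow> bool" where
  "has_rank sc F r \<longleftrightarrow>
     (\<exists>B. B \<subseteq> F \<and> finite B \<and> \<not> module.dependent sc B \<and> module.span sc B = F \<and> card B = r)"

text \<open>The action of a on E_lambda = C[[b]] e_lambda, in the coordinate S of S e_lambda:
  a (S e) = (lambda b S + b^2 S') e.\<close>

definition E_lambda_a :: "complex \<Rightarrow> complex fps \<Rightarrow> complex fps" where
  "E_lambda_a lam S = fps_const lam * fps_X * S + fps_X ^ 2 * fps_deriv S"

text \<open>G/F is isomorphic to E_lambda as (a,b)-module (F a sub-(a,b)-module of G):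
  there is a surjective C[[b]]-linear map G -> E_lambda = C[[b]] with kernel F
  commuting with a (first isomorphism theorem).\<close>

definition quotient_iso_E_lambda ::
  "(complex fps \<Rightarrow> 'v::ab_group_add \<Rightarrow> 'v) \<Rightarrow> ('v \<Rightarrow> 'v) \<Rightarrow> 'v set \<Rightarrow> 'v set \<Rightarrow> complex \<Rightarrow> bool" where
  "quotient_iso_E_lambda sc a G F lam \<longleftrightarrow>
     (\<exists>\<phi> :: 'v \<Rightarrow> complex fps.
        (\<forall>x\<in>G. \<forall>y\<in>G. \<phi> (x + y) = \<phi> x + \<phi> y) \<and>
        (\<forall>c. \<forall>x\<in>G. \<phi> (sc c x) = c * \<phi> x) \<and>
        \<phi> ` G = UNIV \<and>
        {x\<in>G. \<phi> x = 0} = F \<and>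
        (\<forall>x\<in>G. \<phi> (a x) = E_lambda_a lam (\<phi> x)))"

definition JH_series :: "(complex fps \<Rightarrow> 'v::ab_group_add \<Rightarrow> 'v) \<Rightarrow> ('v \<Rightarrow> 'v) \<Rightarrow> nat \<Rightarrow> (nat \<Rightarrow> 'v set) \<Rightarrow> bool" where
  "JH_series sc a n F \<longleftrightarrow>
     F 0 = {0} \<and> F n = UNIV \<and>
     (\<forall>i. 1 \<le> i \<and> i \<le> n \<longrightarrow> F (i - 1) \<subset> F i) \<and>
     (\<forall>i\<le>n. normal_ab_submodule sc a (F i) \<and> has_rank sc (F i) i)"

end

theory Submission
  imports Defs
begin

text \<open>Write \<open>G = F (j + 1)\<close>, \<open>H = F j\<close>, \<open>F0 = F (j - 1)\<close>, \<open>l = lam j\<close> and \<open>u = lam (j + 1)\<close>.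
  Lifting generators of \<open>H/F0 \<cong> E l\<close> and \<open>G/H \<cong> E u\<close> to \<open>e1 \<in> H\<close> and \<open>e2 \<in> G\<close> makes \<open>G/F0\<close>
  free on \<open>e1, e2\<close> with \<open>a e1 \<equiv> l b e1\<close> and \<open>a e2 \<equiv> u b e2 + S e1\<close> modulo \<open>F0\<close>.
  Since \<open>u - l \<notin> \<int>\<close>, the equation \<open>S + (l - u - 1) T + b T' = 0\<close> can be solved coefficientwise.
  If \<open>T(0) = 0\<close>, then \<open>e2 + (T/b) e1\<close> spans an \<open>a\<close>-stable complement of \<open>H\<close> and the new
  term has quotients \<open>E u\<close> and \<open>E l\<close>; otherwise the kernel of the coordinate \<open>T P - b Q\<close> is a new
  normal term, with quotients \<open>E (u + 1)\<close> and \<open>E (l - 1)\<close>.\<close>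

lemma fps_split_constant_term: "(p::'a::comm_ring_1 fps) = fps_const (fps_nth p 0) + fps_X * fps_shift 1 p"
  by (rule fps_ext) (auto simp: fps_nth_fps_const)

lemma fps_eq_0_if_X_divides_family:
  fixes g :: "'b \<Rightarrow> 'a::comm_ring_1 fps"
  assumes "\<And>p. g p = fps_X * g (h p)"
  shows "g p = 0"
proof -
  have "\<forall>p. fps_nth (g p) k = 0" for k
  proof (induction k)
    case 0
    then show ?case by (metis assms fps_X_mult_nth)
  next
    case (Suc k)
    then show ?case by (metis assms fps_X_mult_nth diff_Suc_1 nat.distinct(1))
  qed
  then show ?thesis by (simp add: fps_ext)
qed

lemma ab_module_a_scale_fps_X:
  "ab_module sc a \<Longrightarrow> a (sc fps_X x) = sc fps_X (a x) + sc (fps_X^2) x"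
  unfolding ab_module_def by (metis diff_add_cancel add.commute)

lemma ab_module_scale_defect_shift:
  fixes sc :: "complex fps \<Rightarrow> 'v::ab_group_add \<Rightarrow> 'v" and a :: "'v \<Rightarrow> 'v" and x :: 'v
  assumes E: "ab_module sc a"
  defines "D \<equiv> \<lambda>p. a (sc p x) - sc p (a x) - sc (fps_X^2 * fps_deriv p) x"
  shows "D p = sc fps_X (D (fps_shift 1 p))"
proof -
  interpret module sc using E unfolding ab_module_def by blast
  have a_add: "a (y + z) = a y + a z" and a_const: "a (sc (fps_const c) y) = sc (fps_const c) (a y)"
    for y z c using E unfolding ab_module_def by blast+
  define c q where "c = fps_nth p 0" and "q = fps_shift 1 p"
  have p: "p = fps_const c + fps_X * q" unfolding c_def q_def by (rule fps_split_constant_term)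
  have "fps_X^2 * fps_deriv p = fps_X^2 * q + fps_X * (fps_X^2 * fps_deriv q)"
    by (subst p) (simp add: algebra_simps power2_eq_square)
  then have "sc (fps_X^2 * fps_deriv p) x = sc (fps_X^2 * q) x + sc fps_X (sc (fps_X^2 * fps_deriv q) x)"
    by (simp add: scale_left_distrib)
  moreover have "a (sc p x) = sc (fps_const c) (a x) + (sc fps_X (a (sc q x)) + sc (fps_X^2 * q) x)"
  proof -
    have "a (sc p x) = a (sc (fps_const c) x + sc fps_X (sc q x))"
      by (simp add: p scale_left_distrib)
    also have "\<dots> = sc (fps_const c) (a x) + (sc fps_X (a (sc q x)) + sc (fps_X^2) (sc q x))"
      by (simp only: a_add a_const ab_module_a_scale_fps_X[OF E])
    finally show ?thesis by simp
  qed
  moreover have "sc p (a x) = sc (fps_const c) (a x) + sc fps_X (sc q (a x))"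
    by (subst p) (simp add: scale_left_distrib)
  ultimately show ?thesis unfolding D_def q_def by (simp add: scale_right_diff_distrib)
qed

text \<open>\<open>a\<close> is only \<open>\<complex>\<close>-linear; the defect below is divisible by every power of \<open>b\<close>,
  hence zero because \<open>E\<close> is free of finite rank.\<close>

theorem ab_module_a_scale:
  fixes sc :: "complex fps \<Rightarrow> 'v::ab_group_add \<Rightarrow> 'v"
  assumes E: "ab_module sc a"
  shows "a (sc p x) = sc p (a x) + sc (fps_X^2 * fps_deriv p) x"
proof -
  interpret module sc using E unfolding ab_module_def by blast
  obtain B where B: "finite B" "independent B" "span B = UNIV"
    using E unfolding ab_module_def by blast
  define D where "D p = a (sc p x) - sc p (a x) - sc (fps_X^2 * fps_deriv p) x" for p
  have "representation B (D p) b = 0" for b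
  proof (rule fps_eq_0_if_X_divides_family[where g = "\<lambda>p. representation B (D p) b" and h = "fps_shift 1"])
    fix p
    show "representation B (D p) b = fps_X * representation B (D (fps_shift 1 p)) b"
      using representation_scale[OF B(2), of "D (fps_shift 1 p)" fps_X] B(3)
      unfolding D_def by (subst ab_module_scale_defect_shift[OF E]) simp
  qed
  then have "D p = 0"
    using sum_representation_eq[OF B(2) _ B(1) order_refl, of "D p"] B(3) by simp
  then show ?thesis unfolding D_def by (simp add: algebra_simps)
qed

lemma twisted_equation_S:
  fixes l u :: complex
  assumes "S + fps_const (l - u - 1) * T + fps_X * fps_deriv T = 0"
  shows "S = - ((fps_const l - fps_const u - 1) * T + fps_X * fps_deriv T)"
proof -
  have c: "fps_const (l - u - 1) = fps_const l - fps_const u - 1"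
    by (metis fps_const_sub fps_const_1_eq_1)
  have "S = - (fps_const (l - u - 1) * T + fps_X * fps_deriv T)"
    using assms[unfolded add.assoc] by (rule iffD2[OF eq_neg_iff_add_eq_0])
  then show ?thesis unfolding c .
qed

lemma E_lambda_a_split_coordinate:
  assumes "S + fps_const (l - u - 1) * (fps_X * R) + fps_X * fps_deriv (fps_X * R) = 0"
  shows "E_lambda_a l Q + S * P - R * E_lambda_a u P = E_lambda_a l (Q - R * P)"
  unfolding twisted_equation_S[OF assms] E_lambda_a_def
  by (simp add: fps_deriv_mult algebra_simps power2_eq_square
      del: fps_const_sub fps_const_add fps_const_neg fps_const_mult)

lemma E_lambda_a_twisted_coordinate:
  assumes "S + fps_const (l - u - 1) * T + fps_X * fps_deriv T = 0"
  shows "T * E_lambda_a u P - fps_X * (E_lambda_a l Q + S * P) = E_lambda_a (l - 1) (T * P - fps_X * Q)"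
proof -
  have l1: "fps_const (l - 1) = fps_const l - 1" by (metis fps_const_sub fps_const_1_eq_1)
  show ?thesis
    unfolding twisted_equation_S[OF assms] E_lambda_a_def l1
    by (simp add: fps_deriv_mult algebra_simps power2_eq_square
        del: fps_const_sub fps_const_add fps_const_neg fps_const_mult)
qed

lemma E_lambda_a_twisted_kernel_coordinate:
  assumes "S + fps_const (l - u - 1) * T + fps_X * fps_deriv T = 0"
    and T: "T = fps_const t + fps_X * R" and kernel: "T * P = fps_X * Q"
  shows "E_lambda_a l Q + S * P - R * E_lambda_a u P = E_lambda_a (u + 1) (Q - R * P)"
proof -
  have u1: "fps_const (u + 1) = fps_const u + 1" by (metis fps_const_add fps_const_1_eq_1)
  have "E_lambda_a (u + 1) (Q - R * P) - (E_lambda_a l Q + S * P - R * E_lambda_a u P)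
     = (fps_const u + 1 - fps_const l) * (fps_X * Q) - fps_X * R * P - fps_X^2 * fps_deriv R * P - S * P"
    unfolding E_lambda_a_def u1
    by (simp add: fps_deriv_mult algebra_simps power2_eq_square
        del: fps_const_sub fps_const_add fps_const_neg fps_const_mult)
  also have "\<dots> = (fps_const u + 1 - fps_const l) * (T * P) - fps_X * R * P - fps_X^2 * fps_deriv R * P - S * P"
    using kernel by simp
  also have "\<dots> = 0"
    unfolding twisted_equation_S[OF assms(1)] T
    by (simp add: fps_deriv_mult algebra_simps power2_eq_square
        del: fps_const_sub fps_const_add fps_const_neg fps_const_mult)
  finally show ?thesis by simp
qed

lemma twisted_equation_solvable:
  fixes l u :: complex
  assumes "u - l \<notin> \<int>"
  shows "\<exists>T. S + fps_const (l - u - 1) * T + fps_X * fps_deriv T = 0"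
proof
  have nz: "of_nat k + (l - u - 1) \<noteq> 0" for k :: nat
  proof
    assume "of_nat k + (l - u - 1) = 0"
    then have "u - l = of_int (int k - 1)" by (simp add: algebra_simps)
    then show False using assms by (metis Ints_of_int)
  qed
  define T where "T = Abs_fps (\<lambda>k. - fps_nth S k / (of_nat k + (l - u - 1)))"
  show "S + fps_const (l - u - 1) * T + fps_X * fps_deriv T = 0"
  proof (rule fps_ext)
    fix k
    have "fps_nth (fps_X * fps_deriv T) k = of_nat k * fps_nth T k" by (cases k) simp_all
    moreover have "fps_nth S k + (of_nat k + (l - u - 1)) * fps_nth T k = 0"
      unfolding T_def using nz[of k] by simp
    ultimately show "fps_nth (S + fps_const (l - u - 1) * T + fps_X * fps_deriv T) k = fps_nth 0 k"
      by (simp add: algebra_simps)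
  qed
qed

definition fps_linear_on :: "(complex fps \<Rightarrow> 'v::ab_group_add \<Rightarrow> 'v) \<Rightarrow> 'v set \<Rightarrow> ('v \<Rightarrow> complex fps) \<Rightarrow> bool" where
  "fps_linear_on sc G \<phi> \<longleftrightarrow>
     (\<forall>x\<in>G. \<forall>y\<in>G. \<phi> (x + y) = \<phi> x + \<phi> y) \<and> (\<forall>c. \<forall>x\<in>G. \<phi> (sc c x) = c * \<phi> x)"

lemma fps_linear_onD:
  "fps_linear_on sc G \<phi> \<Longrightarrow> x \<in> G \<Longrightarrow> y \<in> G \<Longrightarrow> \<phi> (x + y) = \<phi> x + \<phi> y"
  "fps_linear_on sc G \<phi> \<Longrightarrow> x \<in> G \<Longrightarrow> \<phi> (sc c x) = c * \<phi> x"
  unfolding fps_linear_on_def by blast+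

lemma fps_linear_on_subset: "fps_linear_on sc G \<phi> \<Longrightarrow> F \<subseteq> G \<Longrightarrow> fps_linear_on sc F \<phi>"
  unfolding fps_linear_on_def by blast

lemma fps_linear_on_combination:
  assumes "fps_linear_on sc G P" "fps_linear_on sc G Q"
  shows "fps_linear_on sc G (\<lambda>x. p * P x + q * Q x)"
  using assms unfolding fps_linear_on_def by (simp add: algebra_simps)

lemma fps_linear_on_diff:
  assumes "module sc" "module.subspace sc G" "fps_linear_on sc G \<phi>" "x \<in> G" "y \<in> G"
  shows "\<phi> (x - y) = \<phi> x - \<phi> y"
proof -
  have "x - y \<in> G" using assms module.subspace_diff by blast
  with assms(3,5) have "\<phi> (x - y + y) = \<phi> (x - y) + \<phi> y" by (intro fps_linear_onD)
  then show ?thesis by simp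
qed

lemma fps_linear_on_kernel_projection:
  assumes m: "module sc" and subG: "module.subspace sc G" and \<phi>: "fps_linear_on sc G \<phi>"
    and w: "w \<in> G" "\<phi> w = 1" and y: "y \<in> G"
  shows "y - sc (\<phi> y) w \<in> {x\<in>G. \<phi> x = 0}"
proof -
  have "sc (\<phi> y) w \<in> G" using w subG module.subspace_scale[OF m] by blast
  then show ?thesis
    using y subG module.subspace_diff[OF m] fps_linear_on_diff[OF m subG \<phi>]
      fps_linear_onD(2)[OF \<phi> w(1)] w
    by auto
qed

lemma quotient_iso_E_lambda_iff:
  "quotient_iso_E_lambda sc a G F lam \<longleftrightarrow>
     (\<exists>\<phi>. fps_linear_on sc G \<phi> \<and> \<phi> ` G = UNIV \<and> {x\<in>G. \<phi> x = 0} = F \<and>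
          (\<forall>x\<in>G. \<phi> (a x) = E_lambda_a lam (\<phi> x)))"
  unfolding quotient_iso_E_lambda_def fps_linear_on_def by blast

lemma quotient_iso_E_lambdaE:
  assumes "quotient_iso_E_lambda sc a G F lam"
  obtains \<phi> w where "fps_linear_on sc G \<phi>" "{x\<in>G. \<phi> x = 0} = F"
    "\<And>x. x \<in> G \<Longrightarrow> \<phi> (a x) = E_lambda_a lam (\<phi> x)" "w \<in> G" "\<phi> w = 1"
proof -
  obtain \<phi> where "fps_linear_on sc G \<phi>" "\<phi> ` G = UNIV" "{x\<in>G. \<phi> x = 0} = F"
    "\<forall>x\<in>G. \<phi> (a x) = E_lambda_a lam (\<phi> x)"
    using assms unfolding quotient_iso_E_lambda_iff by blast
  moreover obtain w where "w \<in> G" "\<phi> w = 1" using \<open>\<phi> ` G = UNIV\<close> by (metis UNIV_I imageE)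
  ultimately show ?thesis using that by blast
qed

lemma quotient_iso_E_lambdaI:
  assumes "module sc" "module.subspace sc G" "fps_linear_on sc G \<phi>"
    and "w \<in> G" "\<phi> w = 1" and "\<And>x. x \<in> G \<Longrightarrow> \<phi> (a x) = E_lambda_a lam (\<phi> x)"
  shows "quotient_iso_E_lambda sc a G {x\<in>G. \<phi> x = 0} lam"
  unfolding quotient_iso_E_lambda_iff
proof (intro exI[of _ \<phi>] conjI ballI)
  have "c = \<phi> (sc c w)" "sc c w \<in> G" for c
    using assms fps_linear_onD(2) module.subspace_scale by fastforce+
  then show "\<phi> ` G = UNIV" by blast
qed (use assms in auto)

lemma quotient_iso_E_lambda_psubset: "quotient_iso_E_lambda sc a G F lam \<Longrightarrow> F \<subset> G"
  by (elim quotient_iso_E_lambdaE) force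

lemma subspace_fps_linear_kernel:
  assumes m: "module sc" and subG: "module.subspace sc G" and \<phi>: "fps_linear_on sc G \<phi>"
  shows "module.subspace sc {x\<in>G. \<phi> x = 0}"
  unfolding module.subspace_def[OF m]
  using module.subspace_0[OF m subG] module.subspace_add[OF m subG] module.subspace_scale[OF m subG]
    fps_linear_onD[OF \<phi>] fps_linear_onD(1)[OF \<phi>, of 0 0]
  by auto

lemma ab_submodule_quotient_kernel:
  assumes m: "module sc" and G: "ab_submodule sc a G" and iso: "quotient_iso_E_lambda sc a G F lam"
  shows "ab_submodule sc a F"
proof -
  obtain \<phi> where \<phi>: "fps_linear_on sc G \<phi>" and F: "{x\<in>G. \<phi> x = 0} = F"
    and a: "\<And>x. x \<in> G \<Longrightarrow> \<phi> (a x) = E_lambda_a lam (\<phi> x)"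
    using iso by (elim quotient_iso_E_lambdaE) blast
  have subG: "module.subspace sc G" and aG: "a ` G \<subseteq> G"
    using G unfolding ab_submodule_def by auto
  have "module.subspace sc F"
    unfolding F[symmetric] by (rule subspace_fps_linear_kernel[OF m subG \<phi>])
  moreover have "a ` F \<subseteq> F" using aG a unfolding F[symmetric] E_lambda_a_def by auto
  ultimately show ?thesis unfolding ab_submodule_def ..
qed

lemma span_insert_kernel_complement:
  fixes sc :: "complex fps \<Rightarrow> 'v::ab_group_add \<Rightarrow> 'v"
  assumes m: "module sc" and subG: "module.subspace sc G" and \<phi>: "fps_linear_on sc G \<phi>"
    and w: "w \<in> G" "\<phi> w = 1" and B: "module.span sc B = {x\<in>G. \<phi> x = 0}"
  shows "module.span sc (insert w B) = G"
proof -
  interpret module sc by (rule m)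
  have "B \<subseteq> G" using B span_superset by blast
  show ?thesis
  proof
    show "span (insert w B) \<subseteq> G" using \<open>B \<subseteq> G\<close> w subG by (intro span_minimal) auto
    show "G \<subseteq> span (insert w B)"
    proof
      fix y assume "y \<in> G"
      then have "y - sc (\<phi> y) w \<in> span B"
        using fps_linear_on_kernel_projection[OF m subG \<phi> w] B by blast
      then show "y \<in> span (insert w B)" using span_breakdown_eq by blast
    qed
  qed
qed

lemma independent_insert_kernel_complement:
  fixes sc :: "complex fps \<Rightarrow> 'v::ab_group_add \<Rightarrow> 'v"
  assumes m: "module sc" and \<phi>: "fps_linear_on sc G \<phi>" and w: "w \<in> G" "\<phi> w = 1"
    and B: "finite B" "\<not> module.dependent sc B" "module.span sc B = {x\<in>G. \<phi> x = 0}"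
  shows "\<not> module.dependent sc (insert w B)"
proof
  interpret module sc by (rule m)
  assume "dependent (insert w B)"
  then obtain u where u: "\<exists>v\<in>insert w B. u v \<noteq> 0" "(\<Sum>v\<in>insert w B. sc (u v) v) = 0"
    using dependent_finite B(1) by blast
  have "w \<notin> B" using B(3) span_superset w by force
  then have eq: "sc (u w) w = - (\<Sum>v\<in>B. sc (u v) v)"
    using u(2) B(1) by (simp add: eq_neg_iff_add_eq_0)
  have "- (\<Sum>v\<in>B. sc (u v) v) \<in> span B" by (intro span_neg span_sum span_scale span_base)
  then have "\<phi> (sc (u w) w) = 0" unfolding eq B(3) by blast
  then have uw: "u w = 0" using fps_linear_onD(2)[OF \<phi> w(1)] w by simp
  then have "(\<Sum>v\<in>B. sc (u v) v) = 0" using eq by simp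
  then have "\<forall>v\<in>B. u v = 0" using B(1,2) dependent_finite by blast
  then show False using u(1) uw by blast
qed

lemma has_rank_quotient_iso:
  fixes sc :: "complex fps \<Rightarrow> 'v::ab_group_add \<Rightarrow> 'v"
  assumes m: "module sc" and subG: "module.subspace sc G"
    and rank: "has_rank sc F r" and iso: "quotient_iso_E_lambda sc a G F lam"
  shows "has_rank sc G (Suc r)"
proof -
  obtain \<phi> w where \<phi>: "fps_linear_on sc G \<phi>" and ker: "{y\<in>G. \<phi> y = 0} = F"
    and w: "w \<in> G" "\<phi> w = 1"
    using iso by (rule quotient_iso_E_lambdaE)
  obtain B where B: "B \<subseteq> F" "finite B" "\<not> module.dependent sc B" "module.span sc B = F" "card B = r"
    using rank unfolding has_rank_def by blast
  have "w \<notin> B" using B(1) ker w by force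
  then have "insert w B \<subseteq> G" "card (insert w B) = Suc r" using B ker w by auto
  with B ker show ?thesis
    unfolding has_rank_def
    using span_insert_kernel_complement[OF m subG \<phi> w] independent_insert_kernel_complement[OF m \<phi> w]
    by (intro exI[of _ "insert w B"]) auto
qed

lemma quotient_free_quotient_iso:
  fixes sc :: "complex fps \<Rightarrow> 'v::ab_group_add \<Rightarrow> 'v"
  assumes m: "module sc" and subG: "module.subspace sc G" and free: "quotient_free sc UNIV G"
    and iso: "quotient_iso_E_lambda sc a G F lam"
  shows "quotient_free sc UNIV F"
proof -
  interpret module sc by (rule m)
  obtain \<phi> w where \<phi>: "fps_linear_on sc G \<phi>" and ker: "{y\<in>G. \<phi> y = 0} = F"
    and w: "w \<in> G" "\<phi> w = 1"
    using iso by (rule quotient_iso_E_lambdaE)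
  obtain g :: "nat \<Rightarrow> 'v" and k where
    g_spans: "\<forall>x. \<exists>c. x - (\<Sum>i<k. sc (c i) (g i)) \<in> G" and
    g_indep: "\<forall>c. (\<Sum>i<k. sc (c i) (g i)) \<in> G \<longrightarrow> (\<forall>i<k. c i = 0)"
    using free unfolding quotient_free_def by blast
  have sum_Suc: "(\<Sum>i<Suc k. sc (c i) ((g(k := w)) i)) = (\<Sum>i<k. sc (c i) (g i)) + sc (c k) w" for c
    by (simp add: lessThan_Suc)
  show ?thesis unfolding quotient_free_def
  proof (intro exI[of _ "g(k := w)"] exI[of _ "Suc k"] conjI allI impI ballI)
    fix x :: 'v
    obtain c where c: "x - (\<Sum>i<k. sc (c i) (g i)) \<in> G" using g_spans by blast
    define y where "y = x - (\<Sum>i<k. sc (c i) (g i))"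
    have "y - sc (\<phi> y) w \<in> F"
      using fps_linear_on_kernel_projection[OF m subG \<phi> w c[folded y_def]] ker by blast
    moreover have "x - (\<Sum>i<Suc k. sc ((c(k := \<phi> y)) i) ((g(k := w)) i)) = y - sc (\<phi> y) w"
      unfolding sum_Suc y_def by (simp add: algebra_simps)
    ultimately show "\<exists>c. x - (\<Sum>i<Suc k. sc (c i) ((g(k := w)) i)) \<in> F" by metis
  next
    fix c i assume F: "(\<Sum>i<Suc k. sc (c i) ((g(k := w)) i)) \<in> F" and i: "i < Suc k"
    have "(\<Sum>i<k. sc (c i) (g i)) + sc (c k) w \<in> G" using F ker sum_Suc by auto
    then have "(\<Sum>i<k. sc (c i) (g i)) \<in> G"
      using subspace_diff[OF subG _ subspace_scale[OF subG w(1), of "c k"]] by fastforce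
    then have ck: "\<forall>i<k. c i = 0" using g_indep by blast
    then have "sc (c k) w \<in> F" using F sum_Suc by simp
    then have "c k = 0" using ker fps_linear_onD(2)[OF \<phi> w(1)] w by auto
    then show "c i = 0" using ck i less_Suc_eq by blast
  qed simp
qed

lemma JH_series_replace:
  fixes sc :: "complex fps \<Rightarrow> 'v::ab_group_add \<Rightarrow> 'v"
  assumes m: "module sc" and JH: "JH_series sc a n F" and j: "1 \<le> j" "j + 1 \<le> n"
    and lower: "quotient_iso_E_lambda sc a F' (F (j - 1)) l0"
    and upper: "quotient_iso_E_lambda sc a (F (j + 1)) F' l1"
  shows "JH_series sc a n (F(j := F'))"
proof -
  have "normal_ab_submodule sc a (F (j + 1))" "has_rank sc (F (j - 1)) (j - 1)"
    using JH j unfolding JH_series_def by auto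
  then have G: "ab_submodule sc a (F (j + 1))" and G_free: "quotient_free sc UNIV (F (j + 1))"
    and rank: "has_rank sc (F (j - 1)) (j - 1)"
    unfolding normal_ab_submodule_def by auto
  have F': "ab_submodule sc a F'" by (rule ab_submodule_quotient_kernel[OF m G upper])
  have "normal_ab_submodule sc a F'"
    using F' quotient_free_quotient_iso[OF m _ G_free upper] G
    unfolding normal_ab_submodule_def ab_submodule_def by blast
  moreover have "has_rank sc F' j"
    using has_rank_quotient_iso[OF m _ rank lower] F' j unfolding ab_submodule_def by simp
  moreover have "F (j - 1) \<subset> F'" "F' \<subset> F (j + 1)"
    using lower upper by (auto dest: quotient_iso_E_lambda_psubset)
  moreover have "F (i - 1) \<subset> F i" if "1 \<le> i" "i \<le> n" for i
    using JH that unfolding JH_series_def by blast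
  ultimately show ?thesis
    using JH j unfolding JH_series_def by (auto simp: le_Suc_eq)
qed

lemma quotient_isos_of_functionals:
  assumes m: "module sc" and subG: "module.subspace sc G"
    and \<phi>: "fps_linear_on sc G \<phi>" and \<psi>: "fps_linear_on sc G \<psi>"
    and F0: "\<And>x. x \<in> F0 \<Longrightarrow> x \<in> G \<and> \<phi> x = 0 \<and> \<psi> x = 0"
    and kernel: "\<And>x. x \<in> G \<Longrightarrow> \<phi> x = 0 \<Longrightarrow> \<psi> x = 0 \<Longrightarrow> x \<in> F0"
    and w: "w \<in> G" "\<phi> w = 1" and v: "v \<in> G" "\<phi> v = 0" "\<psi> v = 1"
    and \<phi>_a: "\<And>x. x \<in> G \<Longrightarrow> \<phi> (a x) = E_lambda_a l' (\<phi> x)"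
    and \<psi>_a: "\<And>x. x \<in> G \<Longrightarrow> \<phi> x = 0 \<Longrightarrow> \<psi> (a x) = E_lambda_a u' (\<psi> x)"
  shows "quotient_iso_E_lambda sc a G {x\<in>G. \<phi> x = 0} l'"
    and "quotient_iso_E_lambda sc a {x\<in>G. \<phi> x = 0} F0 u'"
proof -
  let ?F' = "{x\<in>G. \<phi> x = 0}"
  show "quotient_iso_E_lambda sc a G ?F' l'"
    using quotient_iso_E_lambdaI[OF m subG \<phi> w \<phi>_a] .
  have "quotient_iso_E_lambda sc a ?F' {x\<in>?F'. \<psi> x = 0} u'"
    using v \<psi>_a
    by (intro quotient_iso_E_lambdaI[OF m subspace_fps_linear_kernel[OF m subG \<phi>]]
        fps_linear_on_subset[OF \<psi>]) auto
  moreover have "{x\<in>?F'. \<psi> x = 0} = F0" using F0 kernel by blast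
  ultimately show "quotient_iso_E_lambda sc a ?F' F0 u'" by simp
qed

lemma E_lambda_a_const_mult: "E_lambda_a lam (fps_const c * f) = fps_const c * E_lambda_a lam f"
  unfolding E_lambda_a_def by (simp add: algebra_simps)

text \<open>\<open>P\<close>, \<open>Q\<close> are the coordinates of \<open>G/F0\<close> in the basis \<open>e1, e2\<close>, and \<open>S\<close> is the extension
  class: \<open>a e2 \<equiv> u b e2 + S e1\<close> modulo \<open>F0\<close>.\<close>

locale rank_two_extension =
  fixes sc :: "complex fps \<Rightarrow> 'v::ab_group_add \<Rightarrow> 'v" and a :: "'v \<Rightarrow> 'v"
    and G F0 :: "'v set" and P Q :: "'v \<Rightarrow> complex fps" and e1 e2 :: 'v
    and l u :: complex and S :: "complex fps"
  assumes module: "module sc" and subspace: "module.subspace sc G"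
    and P_linear: "fps_linear_on sc G P" and Q_linear: "fps_linear_on sc G Q"
    and e1: "e1 \<in> G" "P e1 = 0" "Q e1 = 1" and e2: "e2 \<in> G" "P e2 = 1" "Q e2 = 0"
    and kernel: "{x\<in>G. P x = 0 \<and> Q x = 0} = F0"
    and P_a: "\<And>x. x \<in> G \<Longrightarrow> P (a x) = E_lambda_a u (P x)"
    and Q_a: "\<And>x. x \<in> G \<Longrightarrow> Q (a x) = E_lambda_a l (Q x) + S * P x"
begin

lemma combination_mem: "sc p e1 + sc q e2 \<in> G"
  using e1 e2 subspace module.subspace_add[OF module] module.subspace_scale[OF module] by blast

lemma P_combination: "P (sc p e1 + sc q e2) = q"
  and Q_combination: "Q (sc p e1 + sc q e2) = p"
  using e1 e2 subspace module.subspace_scale[OF module]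
    fps_linear_onD[OF P_linear] fps_linear_onD[OF Q_linear] by auto

lemma linear_combination: "fps_linear_on sc G (\<lambda>x. p * P x + q * Q x)"
  by (rule fps_linear_on_combination[OF P_linear Q_linear])

lemma F0_memD: "x \<in> F0 \<Longrightarrow> x \<in> G \<and> P x = 0 \<and> Q x = 0"
  using kernel by blast

lemma split_swap:
  assumes R: "S + fps_const (l - u - 1) * (fps_X * R) + fps_X * fps_deriv (fps_X * R) = 0"
  shows "\<exists>F'. quotient_iso_E_lambda sc a G F' l \<and> quotient_iso_E_lambda sc a F' F0 u \<and> (\<exists>v\<in>F'. P v \<noteq> 0)"
proof -
  define \<phi> where "\<phi> x = Q x - R * P x" for x
  have \<phi>_linear: "fps_linear_on sc G \<phi>"
    using linear_combination[of "- R" 1] unfolding \<phi>_def by (simp add: algebra_simps)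
  define v where "v = sc R e1 + sc 1 e2"
  have v: "v \<in> G" "\<phi> v = 0" "P v = 1"
    unfolding v_def \<phi>_def by (simp_all add: combination_mem P_combination Q_combination)
  have e1': "\<phi> e1 = 1" unfolding \<phi>_def using e1 by simp
  have \<phi>_a: "\<phi> (a x) = E_lambda_a l (\<phi> x)" if "x \<in> G" for x
    unfolding \<phi>_def using that P_a Q_a E_lambda_a_split_coordinate[OF R] by simp
  have F0: "x \<in> G \<and> \<phi> x = 0 \<and> P x = 0" if "x \<in> F0" for x
    using F0_memD[OF that] unfolding \<phi>_def by simp
  have ker: "x \<in> F0" if "x \<in> G" "\<phi> x = 0" "P x = 0" for x
    using that kernel unfolding \<phi>_def by auto
  have P_a': "P (a x) = E_lambda_a u (P x)" if "x \<in> G" "\<phi> x = 0" for x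
    using that(1) by (rule P_a)
  note quotient_isos_of_functionals[OF module subspace \<phi>_linear P_linear F0 ker e1(1) e1' v(1,2,3)
      \<phi>_a P_a']
  moreover have "v \<in> {x\<in>G. \<phi> x = 0}" "P v \<noteq> 0" using v by simp_all
  ultimately show ?thesis by blast
qed

lemma mem_F0_if_twisted_kernel:
  assumes T: "T = fps_const t + fps_X * R" and t: "t \<noteq> 0" and x: "x \<in> G"
    and "T * P x = fps_X * Q x" and Q: "Q x = R * P x"
  shows "x \<in> F0"
proof -
  have "fps_const t * P x = 0"
    using assms(4) unfolding Q T by (simp add: algebra_simps)
  then have "P x = 0" using t by simp
  moreover from this have "Q x = 0" using Q by simp
  ultimately show ?thesis using x kernel by blast
qed

lemma nonsplit_swap:
  assumes T: "S + fps_const (l - u - 1) * T + fps_X * fps_deriv T = 0" and t0: "fps_nth T 0 \<noteq> 0"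
  shows "\<exists>F'. quotient_iso_E_lambda sc a G F' (l - 1) \<and> quotient_iso_E_lambda sc a F' F0 (u + 1) \<and>
    (\<exists>v\<in>F'. P v \<noteq> 0)"
proof -
  define t R c where "t = fps_nth T 0" and "R = fps_shift 1 T" and "c = fps_const (1 / t)"
  have T_split: "T = fps_const t + fps_X * R"
    unfolding t_def R_def by (rule fps_split_constant_term)
  have t: "t \<noteq> 0" using t0 t_def by simp
  then have ct: "c * fps_const t = 1" unfolding c_def by simp
  define \<phi> \<psi> where "\<phi> x = c * (T * P x - fps_X * Q x)" and "\<psi> x = c * (Q x - R * P x)" for x
  have \<phi>_linear: "fps_linear_on sc G \<phi>"
    using linear_combination[of "c * T" "- c * fps_X"] unfolding \<phi>_def by (simp add: algebra_simps)
  have \<psi>_linear: "fps_linear_on sc G \<psi>"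
    using linear_combination[of "- c * R" c] unfolding \<psi>_def by (simp add: algebra_simps)
  define v w where "v = sc T e1 + sc fps_X e2" and "w = sc R e1 + sc 1 e2"
  have v_coords: "v \<in> G" "P v = fps_X" "Q v = T" and w_coords: "w \<in> G" "P w = 1" "Q w = R"
    unfolding v_def w_def by (simp_all add: combination_mem P_combination Q_combination)
  have v: "v \<in> G" "\<phi> v = 0" "\<psi> v = 1" "P v = fps_X"
    unfolding \<phi>_def \<psi>_def using v_coords ct by (simp_all add: T_split algebra_simps)
  have w: "w \<in> G" "\<phi> w = 1"
    unfolding \<phi>_def using w_coords ct by (simp_all add: T_split algebra_simps)
  have \<phi>_a: "\<phi> (a x) = E_lambda_a (l - 1) (\<phi> x)" if "x \<in> G" for x
    unfolding \<phi>_def c_def E_lambda_a_const_mult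
    using that P_a Q_a E_lambda_a_twisted_coordinate[OF T] by simp
  have \<phi>_kernel: "T * P x = fps_X * Q x" if "\<phi> x = 0" for x
    using that t unfolding \<phi>_def c_def by simp
  have \<psi>_a: "\<psi> (a x) = E_lambda_a (u + 1) (\<psi> x)" if "x \<in> G" "\<phi> x = 0" for x
    unfolding \<psi>_def c_def E_lambda_a_const_mult
    using that P_a Q_a E_lambda_a_twisted_kernel_coordinate[OF T T_split \<phi>_kernel] by simp
  have ker: "x \<in> F0" if "x \<in> G" "\<phi> x = 0" "\<psi> x = 0" for x
  proof (rule mem_F0_if_twisted_kernel[OF T_split _ that(1) \<phi>_kernel[OF that(2)]])
    show "t \<noteq> 0" "Q x = R * P x" using that(3) t unfolding \<psi>_def c_def by simp_all
  qed
  have F0: "x \<in> G \<and> \<phi> x = 0 \<and> \<psi> x = 0" if "x \<in> F0" for x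
    using F0_memD[OF that] unfolding \<phi>_def \<psi>_def by simp
  note quotient_isos_of_functionals[OF module subspace \<phi>_linear \<psi>_linear F0 ker w v(1,2,3) \<phi>_a \<psi>_a]
  moreover have "v \<in> {x\<in>G. \<phi> x = 0}" "P v \<noteq> 0" using v by simp_all
  ultimately show ?thesis by blast
qed

theorem swap:
  assumes "u - l \<notin> \<int>"
  shows "\<exists>F' l' u'. quotient_iso_E_lambda sc a G F' l' \<and> quotient_iso_E_lambda sc a F' F0 u' \<and>
    (\<exists>v\<in>F'. P v \<noteq> 0) \<and> l - l' \<in> \<int> \<and> u - u' \<in> \<int>"
proof -
  obtain T where T: "S + fps_const (l - u - 1) * T + fps_X * fps_deriv T = 0"
    using twisted_equation_solvable[OF assms] by blast
  show ?thesis
  proof (cases "fps_nth T 0 = 0")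
    case True
    define R where "R = fps_shift 1 T"
    have "T = fps_X * R"
      using fps_split_constant_term[of T] unfolding True R_def by simp
    with split_swap[of R] T have "\<exists>F'. quotient_iso_E_lambda sc a G F' l \<and>
      quotient_iso_E_lambda sc a F' F0 u \<and> (\<exists>v\<in>F'. P v \<noteq> 0)" by simp
    then show ?thesis by force
  next
    case False
    have "l - (l - 1) \<in> \<int>" "u - (u + 1) \<in> \<int>"
      by (simp_all add: Ints_minus[OF Ints_1, simplified])
    with nonsplit_swap[OF T False] show ?thesis by blast
  qed
qed

end

locale quotient_tower =
  fixes sc :: "complex fps \<Rightarrow> 'v::ab_group_add \<Rightarrow> 'v" and a :: "'v \<Rightarrow> 'v"
    and G H F0 :: "'v set" and P \<phi> :: "'v \<Rightarrow> complex fps" and e1 e2 :: 'v and l u :: complex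
  assumes E: "ab_module sc a" and G: "ab_submodule sc a G" and H: "ab_submodule sc a H"
    and P_linear: "fps_linear_on sc G P" and H_eq: "{x\<in>G. P x = 0} = H"
    and P_a: "\<And>x. x \<in> G \<Longrightarrow> P (a x) = E_lambda_a u (P x)" and e2: "e2 \<in> G" "P e2 = 1"
    and \<phi>_linear: "fps_linear_on sc H \<phi>" and F0_eq: "{x\<in>H. \<phi> x = 0} = F0"
    and \<phi>_a: "\<And>x. x \<in> H \<Longrightarrow> \<phi> (a x) = E_lambda_a l (\<phi> x)" and e1: "e1 \<in> H" "\<phi> e1 = 1"
begin

definition Q :: "'v \<Rightarrow> complex fps" where
  "Q x = \<phi> (x - sc (P x) e2)"

definition extension_class :: "complex fps" where
  "extension_class = \<phi> (a e2 - sc (fps_const u * fps_X) e2)"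

lemma module: "module sc"
  using E unfolding ab_module_def by blast

lemma subspace_G: "module.subspace sc G" and a_G: "a ` G \<subseteq> G"
  and subspace_H: "module.subspace sc H" and a_H: "a ` H \<subseteq> H"
  using G H unfolding ab_submodule_def by auto

lemma projection_mem_H: "x \<in> G \<Longrightarrow> x - sc (P x) e2 \<in> H"
  using fps_linear_on_kernel_projection[OF module subspace_G P_linear e2] H_eq by blast

lemma Q_linear: "fps_linear_on sc G Q"
  unfolding fps_linear_on_def
proof (intro conjI ballI allI)
  interpret module sc by (rule module)
  fix x y assume x: "x \<in> G" and y: "y \<in> G"
  then have eq: "x + y - sc (P (x + y)) e2 = (x - sc (P x) e2) + (y - sc (P y) e2)"
    using fps_linear_onD(1)[OF P_linear] by (simp add: scale_left_distrib algebra_simps)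
  show "Q (x + y) = Q x + Q y"
    unfolding Q_def eq by (rule fps_linear_onD(1)[OF \<phi>_linear projection_mem_H[OF x] projection_mem_H[OF y]])
next
  interpret module sc by (rule module)
  fix c x assume x: "x \<in> G"
  then have eq: "sc c x - sc (P (sc c x)) e2 = sc c (x - sc (P x) e2)"
    using fps_linear_onD(2)[OF P_linear] by (simp add: scale_right_diff_distrib)
  show "Q (sc c x) = c * Q x"
    unfolding Q_def eq by (rule fps_linear_onD(2)[OF \<phi>_linear projection_mem_H[OF x]])
qed

lemma extension_vector_mem_H: "a e2 - sc (fps_const u * fps_X) e2 \<in> H"
proof -
  interpret module sc by (rule module)
  have "a e2 \<in> G" "sc (fps_const u * fps_X) e2 \<in> G"
    using e2 a_G subspace_G subspace_scale by auto
  moreover from this have "P (a e2 - sc (fps_const u * fps_X) e2) = 0"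
    using fps_linear_on_diff[OF module subspace_G P_linear] P_a e2
      fps_linear_onD(2)[OF P_linear e2(1)] by (simp add: E_lambda_a_def)
  ultimately show ?thesis using H_eq subspace_G subspace_diff by blast
qed

lemma Q_a: "x \<in> G \<Longrightarrow> Q (a x) = E_lambda_a l (Q x) + extension_class * P x"
proof -
  interpret module sc by (rule module)
  assume x: "x \<in> G"
  define p y h where "p = P x" and "y = x - sc p e2" and "h = a e2 - sc (fps_const u * fps_X) e2"
  have y: "y \<in> H" unfolding y_def p_def using projection_mem_H x .
  have h: "h \<in> H" unfolding h_def by (rule extension_vector_mem_H)
  have "a x = a y + a (sc p e2)"
    unfolding y_def using E unfolding ab_module_def by (metis diff_add_cancel)
  also have "\<dots> = a y + sc p (a e2) + sc (fps_X^2 * fps_deriv p) e2"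
    by (simp add: ab_module_a_scale[OF E] add.assoc)
  finally have "a x - sc (P (a x)) e2 = a y + sc p h"
    using P_a[OF x] unfolding h_def p_def E_lambda_a_def
    by (simp add: scale_left_distrib scale_right_diff_distrib algebra_simps)
  moreover have "a y \<in> H" "sc p h \<in> H" using y a_H h subspace_H subspace_scale by auto
  ultimately have "Q (a x) = \<phi> (a y) + p * \<phi> h"
    unfolding Q_def using fps_linear_onD[OF \<phi>_linear] h by simp
  then show ?thesis
    unfolding Q_def extension_class_def using \<phi>_a y unfolding y_def p_def h_def
    by (simp add: mult.commute)
qed

lemma kernel_P_Q: "{x\<in>G. P x = 0 \<and> Q x = 0} = F0"
proof -
  have Q_\<phi>: "Q x = \<phi> x" if "P x = 0" for x
    unfolding Q_def using that by (simp add: module.scale_zero_left[OF module])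
  show ?thesis
  proof (intro set_eqI iffI)
    fix x assume "x \<in> {x\<in>G. P x = 0 \<and> Q x = 0}"
    then have "x \<in> H" "\<phi> x = 0" using H_eq Q_\<phi> by auto
    then show "x \<in> F0" using F0_eq by blast
  next
    fix x assume "x \<in> F0"
    then have "x \<in> H" "\<phi> x = 0" using F0_eq by auto
    then show "x \<in> {x\<in>G. P x = 0 \<and> Q x = 0}" using H_eq Q_\<phi> by auto
  qed
qed

lemma rank_two_extension: "rank_two_extension sc a G F0 P Q e1 e2 l u extension_class"
proof -
  interpret module sc by (rule module)
  have e1_G: "e1 \<in> G" "P e1 = 0" using e1 H_eq by auto
  then have Q_e1: "Q e1 = 1" unfolding Q_def using e1 by simp
  have "\<phi> 0 = 0" using fps_linear_onD(2)[OF \<phi>_linear e1(1), of 0] by simp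
  then have Q_e2: "Q e2 = 0" unfolding Q_def using e2 by simp
  show ?thesis
    unfolding rank_two_extension_def
    using module subspace_G P_linear Q_linear e1_G Q_e1 e2 Q_e2 kernel_P_Q P_a Q_a by blast
qed

end

lemma rank_two_extension_of_quotient_isos:
  fixes sc :: "complex fps \<Rightarrow> 'v::ab_group_add \<Rightarrow> 'v"
  assumes E: "ab_module sc a" and G: "ab_submodule sc a G"
    and upper: "quotient_iso_E_lambda sc a G H u" and lower: "quotient_iso_E_lambda sc a H F0 l"
  obtains P Q e1 e2 S where "rank_two_extension sc a G F0 P Q e1 e2 l u S" and "H = {x\<in>G. P x = 0}"
proof -
  have H: "ab_submodule sc a H"
    using E unfolding ab_module_def by (blast intro: ab_submodule_quotient_kernel[OF _ G upper])
  obtain P e2 where P: "fps_linear_on sc G P" "{x\<in>G. P x = 0} = H"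
    "\<And>x. x \<in> G \<Longrightarrow> P (a x) = E_lambda_a u (P x)" "e2 \<in> G" "P e2 = 1"
    using upper by (elim quotient_iso_E_lambdaE) blast
  obtain \<phi> e1 where "fps_linear_on sc H \<phi>" "{x\<in>H. \<phi> x = 0} = F0"
    "\<And>x. x \<in> H \<Longrightarrow> \<phi> (a x) = E_lambda_a l (\<phi> x)" "e1 \<in> H" "\<phi> e1 = 1"
    using lower by (elim quotient_iso_E_lambdaE) blast
  then interpret quotient_tower sc a G H F0 P \<phi> e1 e2 l u
    using E G H P by unfold_locales
  show ?thesis using that rank_two_extension H_eq by blast
qed

theorem mainTheorem4:
  fixes sc :: "complex fps \<Rightarrow> 'v::ab_group_add \<Rightarrow> 'v"
    and a :: "'v \<Rightarrow> 'v"
    and n j :: nat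
    and F :: "nat \<Rightarrow> 'v set"
    and lam :: "nat \<Rightarrow> complex"
  assumes E: "ab_module sc a"
    and reg: "\<exists>(sc' :: complex fps \<Rightarrow> 'w::ab_group_add \<Rightarrow> 'w) a' f.
                 ab_regular_embedding sc a sc' a' f"
    and JH: "JH_series sc a n F"
    and quot: "\<forall>i. 1 \<le> i \<and> i \<le> n \<longrightarrow> quotient_iso_E_lambda sc a (F i) (F (i - 1)) (lam i)"
    and j: "1 \<le> j" "j + 1 \<le> n"
    and nc: "lam (j + 1) - lam j \<notin> \<int>"
  shows "\<exists>F' lj' lj1'.
           F' \<noteq> F j \<and>
           JH_series sc a n (F(j := F')) \<and>
           quotient_iso_E_lambda sc a F' (F (j - 1)) lj' \<and>
           quotient_iso_E_lambda sc a (F (j + 1)) F' lj1' \<and>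
           lam j - lj1' \<in> \<int> \<and> lam (j + 1) - lj' \<in> \<int>"
proof -
  have m: "module sc" using E unfolding ab_module_def by blast
  have G: "ab_submodule sc a (F (j + 1))"
    using JH j unfolding JH_series_def normal_ab_submodule_def by auto
  have upper: "quotient_iso_E_lambda sc a (F (j + 1)) (F j) (lam (j + 1))"
    using quot[rule_format, of "j + 1"] j by simp
  have lower: "quotient_iso_E_lambda sc a (F j) (F (j - 1)) (lam j)"
    using quot j by simp
  obtain P Q e1 e2 S where
    ext: "rank_two_extension sc a (F (j + 1)) (F (j - 1)) P Q e1 e2 (lam j) (lam (j + 1)) S"
    and Fj: "F j = {x \<in> F (j + 1). P x = 0}"
    by (rule rank_two_extension_of_quotient_isos[OF E G upper lower])
  obtain F' l' u' where
    isos: "quotient_iso_E_lambda sc a (F (j + 1)) F' l'" "quotient_iso_E_lambda sc a F' (F (j - 1)) u'"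
    and "\<exists>v\<in>F'. P v \<noteq> 0" and "lam j - l' \<in> \<int>" "lam (j + 1) - u' \<in> \<int>"
    using rank_two_extension.swap[OF ext nc] by blast
  moreover have "F' \<noteq> F j" using \<open>\<exists>v\<in>F'. P v \<noteq> 0\<close> Fj by blast
  moreover have "JH_series sc a n (F(j := F'))"
    by (rule JH_series_replace[OF m JH j isos(2,1)])
  ultimately show ?thesis by blast
qed

end
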